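(* Let $\alpha,\beta$ be compositions with $\beta\subseteq\alpha$, and suppose $\alpha/\beta$ is the disjoint sum of nonempty skew shapes $\alpha^1/\beta^1,\ldots,\alpha^k/\beta^k$, where no two of these components share a row or a column, and $\alpha^i/\beta^i$ lies strictly above $\alpha^{i+1}/\beta^{i+1}$ for $1\le i\le k-1$. Let $n_i=|\alpha^i/\beta^i|$. If for each $i$ the poset $\mathrm{SET}(\alpha^i/\beta^i)$ has a unique minimal element $M_i$, then $\mathrm{SET}(\alpha/\beta)$ has a unique minimal element, namely the tableau whose restriction to the component $\alpha^i/\beta^i$ is obtained from $M_i$ by replacing each entry $a$ with $a+n_1+\cdots+n_{i-1}$.
   Context: Diagrams of compositions have rows numbered from the bottom, row $i$ consisting of columns $1,\ldots,\alpha_i$; for $\beta\subseteq\alpha$ the skew diagram $\alpha/\beta$ consists of the cells in row $i$, column $j$ with $\beta_i<j\le\alpha_i$. $\alpha/\beta$ is a disjoint sum of nonempty sets of cells $A_1,\ldots,A_k$ (each itself a skew shape) if these partition the cells of $\alpha/\beta$ and, for $i\ne j$, the smallest interval containing the row indices of $A_i$ is disjoint from that of $A_j$, and likewise for column indices. $\mathrm{SET}$ of a skew shape with $m$ cells is the set of bijective fillings with $1,\ldots,m$ whose rows increase left to right and columns increase bottom to top. For $1\le i\le m-1$, $\pi_i(T)=T$ if $i+1$ is in a strictly higher row than $i$, $\pi_i(T)=s_i(T)$ (swap $i$ and $i+1$) if $i+1$ is in a strictly lower row than $i$, and $\pi_i(T)=0$ otherwise; the poset order is $T\le T'$ iff $T'$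 is obtained from $T$ by a sequence of operators $\pi_i$ (all intermediate results nonzero). A minimal element is one with no strictly smaller element in $\mathrm{SET}$. *)

theory Defs
  imports Main
begin

type_synonym cell = "nat \<times> nat"   \<comment> \<open>(row, column), rows numbered from 1 at the bottom\<close>

definition is_composition :: "nat list \<Rightarrow> bool" where
  "is_composition \<alpha> \<longleftrightarrow> (\<forall>x\<in>set \<alpha>. 0 < x)"

definition part :: "nat list \<Rightarrow> nat \<Rightarrow> nat" where
  "part \<alpha> r = (if 1 \<le> r \<and> r \<le> length \<alpha> then \<alpha> ! (r - 1) else 0)"

definition comp_contained :: "nat list \<Rightarrow> nat list \<Rightarrow> bool" where
  "comp_contained \<beta> \<alpha> \<longleftrightarrow> length \<beta> \<le> length \<alpha> \<and> (\<forall>r. part \<beta> r \<le> part \<alpha> r)"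

definition skew_diagram :: "nat list \<Rightarrow> nat list \<Rightarrow> cell set" where
  "skew_diagram \<alpha> \<beta> = {(r, j). 1 \<le> r \<and> r \<le> length \<alpha> \<and> part \<beta> r < j \<and> j \<le> part \<alpha> r}"

definition hull :: "nat set \<Rightarrow> nat set" where
  "hull S = {Min S..Max S}"

definition disjoint_sum :: "cell set \<Rightarrow> nat \<Rightarrow> (nat \<Rightarrow> cell set) \<Rightarrow> bool" where
  "disjoint_sum D k A \<longleftrightarrow>
     (\<Union>i\<in>{1..k}. A i) = D \<and>
     (\<forall>i\<in>{1..k}. A i \<noteq> {}) \<and>
     (\<forall>i\<in>{1..k}. \<forall>j\<in>{1..k}. i \<noteq> j \<longrightarrow>
        A i \<inter> A j = {} \<and>
        hull (fst ` A i) \<inter> hull (fst ` A j) = {} \<and>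
        hull (snd ` A i) \<inter> hull (snd ` A j) = {})"

definition SET :: "cell set \<Rightarrow> (cell \<Rightarrow> nat) set" where
  "SET D = {T. bij_betw T D {1..card D} \<and> (\<forall>c. c \<notin> D \<longrightarrow> T c = 0) \<and>
     (\<forall>r j j'. (r, j) \<in> D \<and> (r, j') \<in> D \<and> j < j' \<longrightarrow> T (r, j) < T (r, j')) \<and>
     (\<forall>r r' j. (r, j) \<in> D \<and> (r', j) \<in> D \<and> r < r' \<longrightarrow> T (r, j) < T (r', j))}"

definition row_of :: "cell set \<Rightarrow> (cell \<Rightarrow> nat) \<Rightarrow> nat \<Rightarrow> nat" where
  "row_of D T i = fst (THE c. c \<in> D \<and> T c = i)"

definition swap_entries :: "nat \<Rightarrow> (cell \<Rightarrow> nat) \<Rightarrow> cell \<Rightarrow> nat" where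
  "swap_entries i T = (\<lambda>c. if T c = i then i + 1 else if T c = i + 1 then i else T c)"

text \<open>The operator pi_i; None represents the result 0.\<close>
definition pi_op :: "cell set \<Rightarrow> nat \<Rightarrow> (cell \<Rightarrow> nat) \<Rightarrow> (cell \<Rightarrow> nat) option" where
  "pi_op D i T =
     (if row_of D T (i + 1) > row_of D T i then Some T
      else if row_of D T (i + 1) < row_of D T i then Some (swap_entries i T)
      else None)"

definition pi_step :: "cell set \<Rightarrow> (cell \<Rightarrow> nat) \<Rightarrow> (cell \<Rightarrow> nat) \<Rightarrow> bool" where
  "pi_step D T T' \<longleftrightarrow> T \<in> SET D \<and> (\<exists>i. 1 \<le> i \<and> i < card D \<and> pi_op D i T = Some T')"

definition set_le :: "cell set \<Rightarrow> (cell \<Rightarrow> nat) \<Rightarrow> (cell \<Rightarrow> nat) \<Rightarrow> bool" where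
  "set_le D T T' \<longleftrightarrow> T \<in> SET D \<and> (pi_step D)\<^sup>*\<^sup>* T T'"

definition minimal_elements :: "cell set \<Rightarrow> (cell \<Rightarrow> nat) set" where
  "minimal_elements D = {T \<in> SET D. \<not> (\<exists>T'\<in>SET D. set_le D T' T \<and> T' \<noteq> T)}"

end

(* A standard extended tableau T is minimal iff whenever v + 1 lies in a strictly
   higher row than v, it lies in the same column: otherwise swapping v and v + 1 gives
   a tableau that pi_v sends to T.  The components occupy disjoint columns and A i
   lies above A (i + 1), so a minimal tableau of the sum fills A 1, A 2, ... in this
   order (else some v in a lower component is followed by v + 1 in a higher one).
   Each of its pieces, renumbered from 1, is then minimal, hence equal to M i.
   Conversely, in the shifted concatenation of the M i an entry v + 1 outside the
   component of v lies in a later, hence lower, component, so the criterion holds. *)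
theory Submission
  imports Defs
begin

lemma SET_bij: "T \<in> SET E \<Longrightarrow> bij_betw T E {1..card E}"
  unfolding SET_def by simp

lemma SET_inj_on: "T \<in> SET E \<Longrightarrow> inj_on T E"
  using SET_bij bij_betw_imp_inj_on by blast

lemma SET_range: "T \<in> SET E \<Longrightarrow> c \<in> E \<Longrightarrow> T c \<in> {1..card E}"
  using SET_bij bij_betwE by blast

lemma SET_zero: "T \<in> SET E \<Longrightarrow> c \<notin> E \<Longrightarrow> T c = 0"
  unfolding SET_def by (cases c) auto

lemma SET_surj:
  assumes "T \<in> SET E" "v \<in> {1..card E}"
  obtains c where "c \<in> E" "T c = v"
  using SET_bij[OF assms(1)] assms(2) that unfolding bij_betw_def by (metis imageE)

lemma SET_row_less:
  "T \<in> SET E \<Longrightarrow> (r, j) \<in> E \<Longrightarrow> (r, j') \<in> E \<Longrightarrow> j < j' \<Longrightarrow> T (r, j) < T (r, j')"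
  unfolding SET_def by blast

lemma SET_col_less:
  "T \<in> SET E \<Longrightarrow> (r, j) \<in> E \<Longrightarrow> (r', j) \<in> E \<Longrightarrow> r < r' \<Longrightarrow> T (r, j) < T (r', j)"
  unfolding SET_def by blast

lemma SET_finite: "T \<in> SET E \<Longrightarrow> c \<in> E \<Longrightarrow> finite E"
  using SET_range[of T E c] card.infinite by fastforce

lemma SETI:
  assumes "finite E" "inj_on T E" "\<And>c. c \<in> E \<Longrightarrow> T c \<in> {1..card E}"
    "\<And>c. c \<notin> E \<Longrightarrow> T c = 0"
    "\<And>r j j'. (r, j) \<in> E \<Longrightarrow> (r, j') \<in> E \<Longrightarrow> j < j' \<Longrightarrow> T (r, j) < T (r, j')"
    "\<And>r r' j. (r, j) \<in> E \<Longrightarrow> (r', j) \<in> E \<Longrightarrow> r < r' \<Longrightarrow> T (r, j) < T (r', j)"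
  shows "T \<in> SET E"
proof -
  have "T ` E \<subseteq> {1..card E}" "card (T ` E) = card {1..card E}"
    using assms(2,3) card_image by auto
  then have "T ` E = {1..card E}"
    by (simp add: card_subset_eq)
  then show ?thesis
    unfolding SET_def bij_betw_def using assms by blast
qed

lemma card_SET_le:
  assumes T: "T \<in> SET E" and m: "m \<le> card E"
  shows "card {c \<in> E. T c \<le> m} = m"
proof -
  have "T ` {c \<in> E. T c \<le> m} = {1..m}"
  proof
    show "T ` {c \<in> E. T c \<le> m} \<subseteq> {1..m}"
      using SET_range[OF T] by fastforce
    show "{1..m} \<subseteq> T ` {c \<in> E. T c \<le> m}"
    proof
      fix v assume "v \<in> {1..m}"
      with m obtain c where "c \<in> E" "T c = v"
        using SET_surj[OF T] by (metis atLeastAtMost_iff le_trans)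
      with \<open>v \<in> {1..m}\<close> show "v \<in> T ` {c \<in> E. T c \<le> m}" by auto
    qed
  qed
  moreover have "inj_on T {c \<in> E. T c \<le> m}"
    using SET_inj_on[OF T] by (rule inj_on_subset) blast
  ultimately show ?thesis
    using card_image by fastforce
qed

lemma SET_mono_if_Suc_mono:
  fixes g :: "cell \<Rightarrow> 'a::preorder"
  assumes T: "T \<in> SET E"
    and Suc_mono: "\<And>c c'. c \<in> E \<Longrightarrow> c' \<in> E \<Longrightarrow> T c' = Suc (T c) \<Longrightarrow> g c \<le> g c'"
    and x: "x \<in> E" and y: "y \<in> E" and le: "T x \<le> T y"
  shows "g x \<le> g y"
proof -
  have "g c \<le> g y" if "c \<in> E" "T y = T c + n" for n c
    using that
  proof (induction n arbitrary: c)
    case 0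
    then have "c = y"
      using inj_onD[OF SET_inj_on[OF T]] y by simp
    then show ?case by simp
  next
    case (Suc n)
    have "Suc (T c) \<in> {1..card E}"
      using SET_range[OF T y] Suc.prems(2) by simp
    then obtain d where d: "d \<in> E" "T d = Suc (T c)"
      using SET_surj[OF T] by blast
    have "g c \<le> g d"
      using Suc_mono Suc.prems(1) d by blast
    also have "g d \<le> g y"
      using Suc.IH d Suc.prems(2) by simp
    finally show ?case .
  qed
  moreover obtain n where "T y = T x + n"
    using le le_Suc_ex by blast
  ultimately show ?thesis
    using x by blast
qed

lemma row_of_eq: "inj_on T E \<Longrightarrow> c \<in> E \<Longrightarrow> row_of E T (T c) = fst c"
  unfolding row_of_def by (rule arg_cong[where f = fst], rule the_equality) (auto dest: inj_onD)

lemma swap_entries_involution: "swap_entries v (swap_entries v S) = S"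
  unfolding swap_entries_def by auto

lemma swap_entries_SET:
  assumes S: "S \<in> SET E" and c: "c \<in> E" "S c = v" and c': "c' \<in> E" "S c' = Suc v"
    and row: "fst c \<noteq> fst c'" and col: "snd c \<noteq> snd c'"
  shows "swap_entries v S \<in> SET E"
proof -
  have v: "1 \<le> v" "Suc v \<le> card E"
    using SET_range[OF S c(1)] SET_range[OF S c'(1)] c c' by auto
  have inj: "inj_on S E"
    using SET_inj_on[OF S] .
  have not_pair: "\<not> (S x = v \<and> S y = Suc v)" if "x \<in> E" "y \<in> E" "fst x = fst y \<or> snd x = snd y" for x y
    using that row col inj_onD[OF inj, of x c] inj_onD[OF inj, of y c'] c c' by auto
  have less: "swap_entries v S x < swap_entries v S y" if "S x < S y" "\<not> (S x = v \<and> S y = Suc v)" for x y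
    using that unfolding swap_entries_def by auto
  show ?thesis
  proof (rule SETI[OF SET_finite[OF S c(1)]])
    show "inj_on (swap_entries v S) E"
      using inj unfolding swap_entries_def inj_on_def by (smt (verit) Suc_inject n_not_Suc_n)
  next
    fix x assume "x \<in> E"
    then show "swap_entries v S x \<in> {1..card E}"
      using SET_range[OF S] v unfolding swap_entries_def by auto
  next
    fix x assume "x \<notin> E"
    then show "swap_entries v S x = 0"
      using SET_zero[OF S] v unfolding swap_entries_def by auto
  next
    fix r j j' assume "(r, j) \<in> E" "(r, j') \<in> E" "j < j'"
    then show "swap_entries v S (r, j) < swap_entries v S (r, j')"
      using less SET_row_less[OF S] not_pair by simp
  next
    fix r r' j assume "(r, j) \<in> E" "(r', j) \<in> E" "r < r'"
    then show "swap_entries v S (r, j) < swap_entries v S (r', j)"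
      using less SET_col_less[OF S] not_pair by simp
  qed
qed

lemma pi_step_swap_entries:
  assumes T: "T \<in> SET E" and c: "c \<in> E" "c' \<in> E" "T c' = Suc (T c)"
    and above: "fst c < fst c'" and col: "snd c \<noteq> snd c'"
  shows "pi_step E (swap_entries (T c) T) T"
proof -
  define v where "v = T c"
  define S where "S = swap_entries v T"
  have S: "S \<in> SET E"
    unfolding S_def using swap_entries_SET[OF T c(1) v_def[symmetric] c(2)] c(3) above col v_def by simp
  have "S c = Suc v" "S c' = v"
    unfolding S_def swap_entries_def using c(3) v_def by auto
  then have "row_of E S (Suc v) = fst c" "row_of E S v = fst c'"
    using row_of_eq[OF SET_inj_on[OF S]] c by metis+
  then have "pi_op E v S = Some T"
    unfolding pi_op_def S_def using above swap_entries_involution by simp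
  moreover have "1 \<le> v" "v < card E"
    using SET_range[OF T c(1)] SET_range[OF T c(2)] c(3) v_def by auto
  ultimately show ?thesis
    unfolding pi_step_def using S S_def v_def by auto
qed

lemma strict_pi_predecessor_cells:
  assumes step: "pi_step E S T" and ne: "S \<noteq> T"
  obtains c c' where "c \<in> E" "c' \<in> E" "T c' = Suc (T c)" "fst c < fst c'" "snd c \<noteq> snd c'"
proof -
  obtain v where S: "S \<in> SET E" and v: "1 \<le> v" "v < card E" and pi: "pi_op E v S = Some T"
    using step unfolding pi_step_def by blast
  obtain c where c: "c \<in> E" "S c = Suc v"
    using SET_surj[OF S, of "Suc v"] v by auto
  obtain c' where c': "c' \<in> E" "S c' = v"
    using SET_surj[OF S, of v] v by auto
  have rows: "row_of E S (Suc v) = fst c" "row_of E S v = fst c'"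
    using row_of_eq[OF SET_inj_on[OF S]] c c' by metis+
  with pi ne have T: "T = swap_entries v S" and above: "fst c < fst c'"
    unfolding pi_op_def by (auto split: if_splits)
  have "snd c \<noteq> snd c'"
  proof
    assume "snd c = snd c'"
    then have "S c < S c'"
      using SET_col_less[OF S, of "fst c" "snd c" "fst c'"] c(1) c'(1) above by (metis prod.collapse)
    then show False
      using c c' by simp
  qed
  moreover have "T c = v" "T c' = Suc v"
    unfolding T swap_entries_def using c c' by auto
  ultimately show thesis
    using that[OF c(1) c'(1)] above by simp
qed

lemma rtranclp_last_step_neq:
  assumes "r\<^sup>*\<^sup>* x y" "x \<noteq> y"
  obtains z where "r z y" "z \<noteq> y"
  using assms
proof (induction rule: rtranclp_induct)
  case base
  then show ?case by simp
next
  case (step y z)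
  then show ?case by (cases "y = z") auto
qed

lemma minimal_elements_iff:
  "T \<in> minimal_elements E \<longleftrightarrow>
     T \<in> SET E \<and> (\<forall>c\<in>E. \<forall>c'\<in>E. T c' = Suc (T c) \<and> fst c < fst c' \<longrightarrow> snd c = snd c')"
    (is "_ \<longleftrightarrow> _ \<and> ?local")
proof
  assume min: "T \<in> minimal_elements E"
  then have T: "T \<in> SET E"
    unfolding minimal_elements_def by simp
  have "snd c = snd c'" if c: "c \<in> E" "c' \<in> E" "T c' = Suc (T c)" "fst c < fst c'" for c c'
  proof (rule ccontr)
    define S where "S = swap_entries (T c) T"
    assume "snd c \<noteq> snd c'"
    then have step: "pi_step E S T"
      unfolding S_def using pi_step_swap_entries[OF T c] by simp
    then have "S \<in> SET E" "set_le E S T"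
      unfolding set_le_def pi_step_def by auto
    moreover have "S c \<noteq> T c"
      unfolding S_def swap_entries_def by simp
    ultimately show False
      using min unfolding minimal_elements_def by blast
  qed
  with T show "T \<in> SET E \<and> ?local"
    by simp
next
  assume T: "T \<in> SET E \<and> ?local"
  have "T' = T" if le: "set_le E T' T" for T'
  proof (rule ccontr)
    assume "T' \<noteq> T"
    then obtain S where "pi_step E S T" "S \<noteq> T"
      using le rtranclp_last_step_neq[of "pi_step E" T' T] unfolding set_le_def by blast
    then obtain c c' where "c \<in> E" "c' \<in> E" "T c' = Suc (T c)" "fst c < fst c'" "snd c \<noteq> snd c'"
      by (rule strict_pi_predecessor_cells)
    with T show False
      by blast
  qed
  with T show "T \<in> minimal_elements E"
    unfolding minimal_elements_def by blast
qed

lemma mem_hull: "finite S \<Longrightarrow> x \<in> S \<Longrightarrow> x \<in> hull S"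
  unfolding hull_def by simp

lemma finite_skew_diagram: "finite (skew_diagram \<alpha> \<beta>)"
proof (rule finite_subset)
  show "skew_diagram \<alpha> \<beta> \<subseteq> Sigma {1..length \<alpha>} (\<lambda>r. {..part \<alpha> r})"
    unfolding skew_diagram_def by auto
qed auto

locale stacked_disjoint_sum =
  fixes D :: "cell set" and k :: nat and A :: "nat \<Rightarrow> cell set"
  assumes finite_D: "finite D"
    and disjoint_sum: "disjoint_sum D k A"
    and above_next: "\<forall>i. 1 \<le> i \<and> i < k \<longrightarrow> (\<forall>c\<in>A i. \<forall>c'\<in>A (Suc i). fst c' < fst c)"
begin

lemma D_eq: "D = (\<Union>i\<in>{1..k}. A i)"
  using disjoint_sum unfolding disjoint_sum_def by blast

lemma component_subset: "i \<in> {1..k} \<Longrightarrow> A i \<subseteq> D"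
  using D_eq by blast

lemma finite_component: "i \<in> {1..k} \<Longrightarrow> finite (A i)"
  using component_subset finite_D finite_subset by blast

lemma component_nonempty: "i \<in> {1..k} \<Longrightarrow> A i \<noteq> {}"
  using disjoint_sum unfolding disjoint_sum_def by blast

lemma components_disjoint: "i \<in> {1..k} \<Longrightarrow> j \<in> {1..k} \<Longrightarrow> i \<noteq> j \<Longrightarrow> A i \<inter> A j = {}"
  using disjoint_sum unfolding disjoint_sum_def by blast

lemma columns_distinct:
  assumes "i \<in> {1..k}" "j \<in> {1..k}" "i \<noteq> j" "c \<in> A i" "c' \<in> A j"
  shows "snd c \<noteq> snd c'"
proof
  assume "snd c = snd c'"
  then have "snd c \<in> hull (snd ` A i) \<inter> hull (snd ` A j)"
    using assms mem_hull finite_component by (metis IntI finite_imageI image_eqI)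
  with assms show False
    using disjoint_sum unfolding disjoint_sum_def by blast
qed

lemma component_above:
  assumes "1 \<le> i" "i < j" "j \<le> k" "c \<in> A i" "c' \<in> A j"
  shows "fst c' < fst c"
  using assms
proof (induction j arbitrary: c')
  case 0
  then show ?case by simp
next
  case (Suc j)
  show ?case
  proof (cases "i = j")
    case True
    then show ?thesis using above_next Suc.prems by auto
  next
    case False
    then obtain d where d: "d \<in> A j"
      using component_nonempty[of j] Suc.prems by fastforce
    have "1 \<le> j" "j < k"
      using Suc.prems False by auto
    then have "fst c' < fst d"
      using above_next Suc.prems(5) d by blast
    also have "fst d < fst c"
      using Suc.IH Suc.prems False d by simp
    finally show ?thesis .
  qed
qed

lemma rows_distinct:
  assumes "i \<in> {1..k}" "j \<in> {1..k}" "i \<noteq> j" "c \<in> A i" "c' \<in> A j"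
  shows "fst c \<noteq> fst c'"
  using assms component_above[of i j c c'] component_above[of j i c' c]
  by (cases "i < j") auto

definition component_of :: "cell \<Rightarrow> nat" where
  "component_of c = (THE i. i \<in> {1..k} \<and> c \<in> A i)"

lemma component_of_eq: "i \<in> {1..k} \<Longrightarrow> c \<in> A i \<Longrightarrow> component_of c = i"
  unfolding component_of_def by (rule the_equality) (use components_disjoint in blast)+

lemma component_of_mem:
  assumes "c \<in> D"
  shows "component_of c \<in> {1..k} \<and> c \<in> A (component_of c)"
proof -
  obtain i where "i \<in> {1..k}" "c \<in> A i"
    using assms D_eq by blast
  then show ?thesis
    using component_of_eq by simp
qed

definition offset :: "nat \<Rightarrow> nat" where
  "offset i = (\<Sum>j\<in>{1..<i}. card (A j))"

lemma offset_Suc: "1 \<le> i \<Longrightarrow> offset (Suc i) = offset i + card (A i)"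
  unfolding offset_def by (simp add: sum.atLeastLessThan_Suc)

lemma offset_mono: "i \<le> j \<Longrightarrow> offset i \<le> offset j"
  unfolding offset_def by (rule sum_mono2) auto

lemma card_lower_components: "i \<le> Suc k \<Longrightarrow> card (\<Union>j\<in>{1..<i}. A j) = offset i"
  unfolding offset_def
  by (rule card_UN_disjoint) (use finite_component components_disjoint in auto)

lemma card_D: "card D = offset (Suc k)"
  using card_lower_components[of "Suc k"] D_eq atLeastLessThanSuc_atLeastAtMost by simp

definition glue :: "(nat \<Rightarrow> cell \<Rightarrow> nat) \<Rightarrow> cell \<Rightarrow> nat" where
  "glue F c = (if c \<in> D then F (component_of c) c + offset (component_of c) else 0)"

lemma glue_eq: "i \<in> {1..k} \<Longrightarrow> c \<in> A i \<Longrightarrow> glue F c = F i c + offset i"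
  unfolding glue_def using component_subset component_of_eq by auto

lemma glue_cong: "(\<And>i. i \<in> {1..k} \<Longrightarrow> F i = G i) \<Longrightarrow> glue F = glue G"
  unfolding glue_def using component_of_mem by (intro ext) simp

lemma glue_range:
  assumes "F i \<in> SET (A i)" "i \<in> {1..k}" "c \<in> A i"
  shows "glue F c \<in> {offset i + 1..offset (Suc i)}"
proof -
  have "F i c \<in> {1..card (A i)}"
    using SET_range assms(1,3) .
  then show ?thesis
    using glue_eq[OF assms(2,3)] offset_Suc[of i] assms(2) by auto
qed

lemma glue_SET:
  assumes F: "\<forall>i\<in>{1..k}. F i \<in> SET (A i)"
  shows "glue F \<in> SET D"
proof (rule SETI[OF finite_D])
  have less: "glue F x < glue F y"
    if "i < j" "i \<in> {1..k}" "j \<in> {1..k}" "x \<in> A i" "y \<in> A j" for i j x y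
  proof -
    have "glue F x \<le> offset (Suc i)"
      using glue_range[of F i x] F that(2,4) by simp
    also have "\<dots> \<le> offset j"
      using offset_mono that(1) by simp
    also have "\<dots> < glue F y"
      using glue_range[of F j y] F that(3,5) by simp
    finally show ?thesis .
  qed
  have same_component: "i = j"
    if "i \<in> {1..k}" "j \<in> {1..k}" "x \<in> A i" "y \<in> A j" "glue F x = glue F y" for i j x y
    using less[of i j x y] less[of j i y x] that by (cases i j rule: linorder_cases) simp_all
  show "inj_on (glue F) D"
  proof (rule inj_onI)
    fix x y assume xy: "x \<in> D" "y \<in> D" "glue F x = glue F y"
    obtain i j where ij: "i \<in> {1..k}" "x \<in> A i" "j \<in> {1..k}" "y \<in> A j"
      using component_of_mem xy(1,2) by blast
    with xy(3) have "i = j"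
      using same_component by blast
    with ij xy(3) have "F i x = F i y"
      using glue_eq by simp
    with ij \<open>i = j\<close> show "x = y"
      using inj_onD[OF SET_inj_on] F by blast
  qed
next
  fix c assume "c \<in> D"
  then obtain i where i: "i \<in> {1..k}" "c \<in> A i"
    using component_of_mem by blast
  have "offset (Suc i) \<le> card D"
    using card_D offset_mono i(1) by simp
  then show "glue F c \<in> {1..card D}"
    using glue_range[of F i c] F i by auto
next
  fix c assume "c \<notin> D"
  then show "glue F c = 0"
    unfolding glue_def by simp
next
  fix r j j' assume cells: "(r, j) \<in> D" "(r, j') \<in> D" "j < j'"
  then obtain a b where ab: "a \<in> {1..k}" "(r, j) \<in> A a" "b \<in> {1..k}" "(r, j') \<in> A b"
    using component_of_mem by blast
  then have "a = b"
    using rows_distinct[of a b] by fastforce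
  with ab cells(3) have "F a (r, j) < F a (r, j')"
    using SET_row_less[of "F a" "A a"] F by simp
  with ab \<open>a = b\<close> show "glue F (r, j) < glue F (r, j')"
    using glue_eq by simp
next
  fix r r' j assume cells: "(r, j) \<in> D" "(r', j) \<in> D" "r < r'"
  then obtain a b where ab: "a \<in> {1..k}" "(r, j) \<in> A a" "b \<in> {1..k}" "(r', j) \<in> A b"
    using component_of_mem by blast
  then have "a = b"
    using columns_distinct[of a b] by fastforce
  with ab cells(3) have "F a (r, j) < F a (r', j)"
    using SET_col_less[of "F a" "A a"] F by simp
  with ab \<open>a = b\<close> show "glue F (r, j) < glue F (r', j)"
    using glue_eq by simp
qed

lemma glue_minimal:
  assumes F: "\<forall>i\<in>{1..k}. F i \<in> minimal_elements (A i)"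
  shows "glue F \<in> minimal_elements D"
proof -
  have F_SET: "\<forall>i\<in>{1..k}. F i \<in> SET (A i)"
    using F unfolding minimal_elements_iff by simp
  have "snd c = snd c'"
    if c: "c \<in> D" "c' \<in> D" "glue F c' = Suc (glue F c)" "fst c < fst c'" for c c'
  proof -
    obtain a b where ab: "a \<in> {1..k}" "c \<in> A a" "b \<in> {1..k}" "c' \<in> A b"
      using component_of_mem c(1,2) by blast
    consider "a < b" | "b < a" | "a = b"
      by linarith
    then show ?thesis
    proof cases
      case 1
      then have "fst c' < fst c"
        using component_above ab by simp
      with c(4) show ?thesis
        by simp
    next
      case 2
      have "glue F c' \<le> offset (Suc b)"
        using glue_range[of F b c'] F_SET ab(3,4) by simp
      also have "\<dots> \<le> offset a"
        using offset_mono 2 by simp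
      also have "\<dots> < glue F c"
        using glue_range[of F a c] F_SET ab(1,2) by simp
      finally show ?thesis
        using c(3) by simp
    next
      case 3
      with ab c(3) have "F a c' = Suc (F a c)"
        using glue_eq by simp
      moreover have "F a \<in> minimal_elements (A a)"
        using F ab(1) by simp
      ultimately show ?thesis
        using ab 3 c(4) unfolding minimal_elements_iff by blast
    qed
  qed
  then show ?thesis
    using glue_SET[OF F_SET] unfolding minimal_elements_iff by blast
qed

definition piece :: "nat \<Rightarrow> (cell \<Rightarrow> nat) \<Rightarrow> cell \<Rightarrow> nat" where
  "piece i T c = (if c \<in> A i then T c - offset i else 0)"

lemma piece_SET:
  assumes T: "T \<in> SET D" and i: "i \<in> {1..k}"
    and range: "\<And>c. c \<in> A i \<Longrightarrow> T c \<in> {offset i + 1..offset (Suc i)}"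
  shows "piece i T \<in> SET (A i)"
proof (rule SETI[OF finite_component[OF i]])
  have A_D: "A i \<subseteq> D"
    using component_subset[OF i] .
  show "inj_on (piece i T) (A i)"
  proof (rule inj_onI)
    fix x y assume xy: "x \<in> A i" "y \<in> A i" "piece i T x = piece i T y"
    then have "T x = T y"
      using range[of x] range[of y] unfolding piece_def by auto
    then show "x = y"
      using inj_onD[OF SET_inj_on[OF T]] A_D xy(1,2) by blast
  qed
next
  fix c assume "c \<in> A i"
  then show "piece i T c \<in> {1..card (A i)}"
    using range[of c] offset_Suc[of i] i unfolding piece_def by auto
next
  fix c assume "c \<notin> A i"
  then show "piece i T c = 0"
    unfolding piece_def by simp
next
  fix r j j' assume cells: "(r, j) \<in> A i" "(r, j') \<in> A i" "j < j'"
  then have "T (r, j) < T (r, j')"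
    using SET_row_less[OF T] component_subset[OF i] by blast
  then show "piece i T (r, j) < piece i T (r, j')"
    using range[OF cells(1)] cells(1,2) unfolding piece_def by auto
next
  fix r r' j assume cells: "(r, j) \<in> A i" "(r', j) \<in> A i" "r < r'"
  then have "T (r, j) < T (r', j)"
    using SET_col_less[OF T] component_subset[OF i] by blast
  then show "piece i T (r, j) < piece i T (r', j)"
    using range[OF cells(1)] cells(1,2) unfolding piece_def by auto
qed

lemma minimal_component_of_mono:
  assumes T: "T \<in> minimal_elements D" and c: "c \<in> D" "c' \<in> D" "T c \<le> T c'"
  shows "component_of c \<le> component_of c'"
proof (rule SET_mono_if_Suc_mono[where g = component_of])
  show TS: "T \<in> SET D"
    using T unfolding minimal_elements_iff by simp
  fix x y assume xy: "x \<in> D" "y \<in> D" "T y = Suc (T x)"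
  show "component_of x \<le> component_of y"
  proof (rule ccontr)
    assume "\<not> component_of x \<le> component_of y"
    moreover have "component_of x \<in> {1..k}" "x \<in> A (component_of x)"
      "component_of y \<in> {1..k}" "y \<in> A (component_of y)"
      using component_of_mem xy(1,2) by auto
    ultimately have "fst x < fst y" "snd x \<noteq> snd y"
      using component_above[of "component_of y" "component_of x" y x]
        columns_distinct[of "component_of x" "component_of y" x y] by auto
    with xy T show False
      unfolding minimal_elements_iff by blast
  qed
qed (use c in simp_all)

lemma minimal_range:
  assumes T: "T \<in> minimal_elements D" and i: "i \<in> {1..k}" and c: "c \<in> A i"
  shows "T c \<in> {offset i + 1..offset (Suc i)}"
proof -
  have TS: "T \<in> SET D"
    using T unfolding minimal_elements_iff by simp
  have cD: "c \<in> D" and comp_c: "component_of c = i"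
    using component_subset component_of_eq i c by auto
  have Tc: "T c \<in> {1..card D}"
    using SET_range[OF TS cD] .
  have lower: "(\<Union>j\<in>{1..<i}. A j) \<subseteq> {d \<in> D. T d \<le> T c - 1}"
  proof
    fix d assume "d \<in> (\<Union>j\<in>{1..<i}. A j)"
    then obtain j where j: "j \<in> {1..<i}" "d \<in> A j"
      by blast
    then have "j \<in> {1..k}"
      using i by simp
    then have dD: "d \<in> D" and comp_d: "component_of d = j"
      using component_subset component_of_eq j(2) by auto
    have "T d < T c"
    proof (rule ccontr)
      assume "\<not> T d < T c"
      then have "component_of c \<le> component_of d"
        using minimal_component_of_mono[OF T cD dD] by simp
      with comp_c comp_d j(1) show False
        by simp
    qed
    with dD show "d \<in> {d \<in> D. T d \<le> T c - 1}"
      by simp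
  qed
  have upper: "{d \<in> D. T d \<le> T c} \<subseteq> (\<Union>j\<in>{1..<Suc i}. A j)"
  proof
    fix d assume d: "d \<in> {d \<in> D. T d \<le> T c}"
    then have "component_of d \<le> i"
      using minimal_component_of_mono[OF T _ cD] comp_c by simp
    moreover have "component_of d \<in> {1..k}" "d \<in> A (component_of d)"
      using component_of_mem d by auto
    ultimately show "d \<in> (\<Union>j\<in>{1..<Suc i}. A j)"
      by auto
  qed
  have "offset i = card (\<Union>j\<in>{1..<i}. A j)"
    using card_lower_components i by simp
  also have "\<dots> \<le> card {d \<in> D. T d \<le> T c - 1}"
    using lower finite_D by (simp add: card_mono)
  also have "\<dots> = T c - 1"
    by (rule card_SET_le[OF TS]) (use Tc in auto)
  finally have ge: "offset i + 1 \<le> T c"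
    using Tc by auto
  have "T c = card {d \<in> D. T d \<le> T c}"
    by (rule card_SET_le[OF TS, symmetric]) (use Tc in auto)
  also have "\<dots> \<le> card (\<Union>j\<in>{1..<Suc i}. A j)"
    using upper finite_component i by (intro card_mono) auto
  also have "\<dots> = offset (Suc i)"
    using card_lower_components i by simp
  finally show ?thesis
    using ge by simp
qed

lemma piece_minimal:
  assumes T: "T \<in> minimal_elements D" and i: "i \<in> {1..k}"
  shows "piece i T \<in> minimal_elements (A i)"
proof -
  have TS: "T \<in> SET D"
    using T unfolding minimal_elements_iff by simp
  have "snd c = snd c'"
    if c: "c \<in> A i" "c' \<in> A i" "piece i T c' = Suc (piece i T c)" "fst c < fst c'" for c c'
  proof -
    have "T c' = Suc (T c)"
      using minimal_range[OF T i c(1)] minimal_range[OF T i c(2)] c(1-3)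
      unfolding piece_def by auto
    with T c show ?thesis
      using component_subset[OF i] unfolding minimal_elements_iff by blast
  qed
  moreover have "piece i T \<in> SET (A i)"
    using piece_SET[OF TS i] minimal_range[OF T i] by simp
  ultimately show ?thesis
    unfolding minimal_elements_iff by blast
qed

lemma glue_piece:
  assumes T: "T \<in> minimal_elements D"
  shows "glue (\<lambda>i. piece i T) = T"
proof
  fix c
  show "glue (\<lambda>i. piece i T) c = T c"
  proof (cases "c \<in> D")
    case True
    then obtain i where i: "i \<in> {1..k}" "c \<in> A i"
      using component_of_mem by blast
    then show ?thesis
      using glue_eq[OF i] minimal_range[OF T i] unfolding piece_def by auto
  next
    case False
    moreover have "T \<in> SET D"
      using T unfolding minimal_elements_iff by simp
    ultimately show ?thesis
      using SET_zero unfolding glue_def by simp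
  qed
qed

theorem minimal_elements_eq_glue:
  assumes M: "\<forall>i\<in>{1..k}. minimal_elements (A i) = {M i}"
  shows "minimal_elements D = {glue M}"
proof -
  have "T = glue M" if T: "T \<in> minimal_elements D" for T
  proof -
    have "piece i T = M i" if "i \<in> {1..k}" for i
      using piece_minimal[OF T that] M that by simp
    then have "glue (\<lambda>i. piece i T) = glue M"
      by (rule glue_cong)
    then show ?thesis
      using glue_piece[OF T] by simp
  qed
  moreover have "glue M \<in> minimal_elements D"
    using glue_minimal M by simp
  ultimately show ?thesis
    by blast
qed

end

theorem proposition5p1:
  fixes \<alpha> \<beta> :: "nat list" and k :: nat and A :: "nat \<Rightarrow> cell set"
    and M :: "nat \<Rightarrow> cell \<Rightarrow> nat"
  assumes "is_composition \<alpha>" and "is_composition \<beta>" and "comp_contained \<beta> \<alpha>"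
    and "disjoint_sum (skew_diagram \<alpha> \<beta>) k A"
    and "\<forall>i. 1 \<le> i \<and> i < k \<longrightarrow> (\<forall>c\<in>A i. \<forall>c'\<in>A (Suc i). fst c' < fst c)"
    and "\<forall>i\<in>{1..k}. minimal_elements (A i) = {M i}"
  shows "\<exists>T. minimal_elements (skew_diagram \<alpha> \<beta>) = {T} \<and>
           (\<forall>i\<in>{1..k}. \<forall>c\<in>A i. T c = M i c + (\<Sum>j\<in>{1..<i}. card (A j)))"
proof -
  interpret stacked_disjoint_sum "skew_diagram \<alpha> \<beta>" k A
    using finite_skew_diagram assms(4,5) by (simp add: stacked_disjoint_sum_def)
  have "minimal_elements (skew_diagram \<alpha> \<beta>) = {glue M}"
    using minimal_elements_eq_glue assms(6) .
  moreover have "\<forall>i\<in>{1..k}. \<forall>c\<in>A i. glue M c = M i c + (\<Sum>j\<in>{1..<i}. card (A j))"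
    using glue_eq unfolding offset_def by blast
  ultimately show ?thesis
    by blast
qed

end
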